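(* Let $\mathbb{X},\mathbb{Y}$ be Banach spaces, $g:\mathbb{X}\to\mathbb{Y}$ continuously differentiable, $f:\mathbb{Y}\to\mathbb{R}\cup\{+\infty\}$ proper, lower semicontinuous and convex, $S_f:=\{y:f(y)\le0\}$ and $\mathcal{S}:=\{x:(f\circ g)(x)\le0\}=g^{-1}(S_f)$. Let $\bar x\in\mathcal{S}$ with $g(\bar x)\in{\rm int}({\rm dom} f)$ and suppose $g$ is metrically regular around $\bar x$. Then $\mathcal{S}$ has the Shapiro first order contact property around $\bar x$, there is $\delta>0$ with $\mathbf{T}^{\mathbf B}(\mathcal{S},x)=\nabla g(x)^{-1}(\mathbf{T}^{\mathbf B}(S_f,g(x)))$ for all $x\in\mathcal{S}\cap\mathbf{B}(\bar x,\delta)$, and $f\circ g$ has the epigraphical Shapiro first order contact property at $\bar x$.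
   Context: $\mathbf{B}(a,\delta)$ is the open ball with center $a$ and radius $\delta$; $\mathbf{d}(x,D):=\inf\{\|x-y\|:y\in D\}$. Bouligand tangent cone $\mathbf{T}^{\mathbf B}(C,c)$: all $v$ with $v_n\to v$, $t_n\downarrow0$, $c+t_nv_n\in C$. A closed set $C$ has the Shapiro first order contact property at $a\in C$ if for every $\varepsilon>0$ there is $\delta>0$ with $\mathbf{d}(x-u,\mathbf{T}^{\mathbf B}(C,u))\le\varepsilon\|x-u\|$ for all $x,u\in C\cap\mathbf{B}(a,\delta)$; around $\bar x$ means at every point of $C\cap U$ for some neighborhood $U$ of $\bar x$. A function $\varphi$ has the epigraphical Shapiro first order contact property at $\bar x$ if ${\rm epi}(\varphi)=\{(x,\alpha):\varphi(x)\le\alpha\}\subseteq\mathbb{X}\times\mathbb{R}$ (norm $\|x\|+|\alpha|$) has the Shapiro first order contact property at $(\bar x,\varphi(\bar x))$. $g$ is metrically regular around $\bar x$ if there exist $\kappa>0$ and neighborhoods $U$ of $\bar x$, $V$ of $g(\bar x)$ with $\mathbf{d}(x,g^{-1}(y))\le\kappa\|g(x)-y\|$ for all $(x,y)\in U\times V$. *)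

theory Defs
  imports "HOL-Analysis.Analysis"
begin

(* distance from a point to a set, w.r.t. a norm-like function N; value +\<infinity> for the empty set *)
definition setdistN :: "('a::minus \<Rightarrow> real) \<Rightarrow> 'a \<Rightarrow> 'a set \<Rightarrow> ereal" where
  "setdistN N x D = (INF y\<in>D. ereal (N (x - y)))"

abbreviation setdist_pt :: "'a::real_normed_vector \<Rightarrow> 'a set \<Rightarrow> ereal" where
  "setdist_pt x D \<equiv> setdistN norm x D"

definition bouligand_cone :: "'a::real_normed_vector set \<Rightarrow> 'a \<Rightarrow> 'a set" where
  "bouligand_cone C c = {v. \<exists>vs ts. (vs \<longlonglongrightarrow> v) \<and> (ts \<longlonglongrightarrow> 0) \<and>
       (\<forall>n. ts n > (0::real)) \<and> decseq ts \<and> (\<forall>n. c + ts n *\<^sub>R vs n \<in> C)}"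

definition shapiro_at_N :: "('a::real_normed_vector \<Rightarrow> real) \<Rightarrow> 'a set \<Rightarrow> 'a \<Rightarrow> bool" where
  "shapiro_at_N N C a \<longleftrightarrow> a \<in> C \<and> (\<forall>\<epsilon>>0. \<exists>\<delta>>0. \<forall>x\<in>C. \<forall>u\<in>C.
      N (x - a) < \<delta> \<longrightarrow> N (u - a) < \<delta> \<longrightarrow>
      setdistN N (x - u) (bouligand_cone C u) \<le> ereal (\<epsilon> * N (x - u)))"

abbreviation shapiro_at :: "'a::real_normed_vector set \<Rightarrow> 'a \<Rightarrow> bool" where
  "shapiro_at C a \<equiv> shapiro_at_N norm C a"

definition shapiro_around :: "'a::real_normed_vector set \<Rightarrow> 'a \<Rightarrow> bool" where
  "shapiro_around C xb \<longleftrightarrow> (\<exists>U. open U \<and> xb \<in> U \<and> (\<forall>a\<in>C \<inter> U. shapiro_at C a))"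

definition epigraph :: "('a \<Rightarrow> ereal) \<Rightarrow> ('a \<times> real) set" where
  "epigraph \<phi> = {(x, \<alpha>). \<phi> x \<le> ereal \<alpha>}"

definition sumnorm :: "('a::real_normed_vector \<times> real) \<Rightarrow> real" where
  "sumnorm p = norm (fst p) + \<bar>snd p\<bar>"

definition epi_shapiro_at :: "('a::real_normed_vector \<Rightarrow> ereal) \<Rightarrow> 'a \<Rightarrow> bool" where
  "epi_shapiro_at \<phi> xb \<longleftrightarrow> shapiro_at_N sumnorm (epigraph \<phi>) (xb, real_of_ereal (\<phi> xb))"

definition metrically_regular_around :: "('a::real_normed_vector \<Rightarrow> 'b::real_normed_vector) \<Rightarrow> 'a \<Rightarrow> bool" where
  "metrically_regular_around g xb \<longleftrightarrow> (\<exists>\<kappa>>0. \<exists>U V. open U \<and> xb \<in> U \<and> open V \<and> g xb \<in> V \<and>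
     (\<forall>x\<in>U. \<forall>y\<in>V. setdist_pt x (g -` {y}) \<le> ereal (\<kappa> * norm (g x - y))))"

definition proper_fun :: "('a \<Rightarrow> ereal) \<Rightarrow> bool" where
  "proper_fun f \<longleftrightarrow> (\<forall>y. f y \<noteq> -\<infinity>) \<and> (\<exists>y. f y \<noteq> \<infinity>)"

definition lsc_fun :: "('a::topological_space \<Rightarrow> ereal) \<Rightarrow> bool" where
  "lsc_fun f \<longleftrightarrow> (\<forall>c::real. closed {y. f y \<le> ereal c})"

definition convex_fun :: "('a::real_vector \<Rightarrow> ereal) \<Rightarrow> bool" where
  "convex_fun f \<longleftrightarrow> convex (epigraph f)"

definition effdom :: "('a \<Rightarrow> ereal) \<Rightarrow> 'a set" where
  "effdom f = {y. f y < \<infinity>}"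

end

theory Submission
  imports Defs
begin

text \<open>Metric regularity does two things. It lifts
  tangent directions: if \<open>g' u w\<close> is tangent to \<open>K\<close> at \<open>g u\<close>, then \<open>w\<close> is tangent to \<open>g -` K\<close>
  at \<open>u\<close>, by pulling the points \<open>g u + t y\<close> back to preimages near \<open>u + t w\<close>. And it makes every
  \<open>g' u\<close> surjective with a uniformly bounded right inverse: a preimage of \<open>g u + t r\<close>, rescaled by
  \<open>1/t\<close>, solves \<open>g' u h = r\<close> up to the linearization error, which Banach's iteration removes.
  For \<open>x, u \<in> g -` K\<close>, convexity makes \<open>g x - g u\<close> tangent to \<open>K\<close> at \<open>g u\<close>; correcting \<open>x - u\<close>
  by a bounded preimage of the error \<open>g x - g u - g' u (x - u)\<close>, which is uniformly
  \<open>o(norm (x - u))\<close>, gives a tangent vector of \<open>g -` K\<close> at \<open>u\<close> close to \<open>x - u\<close>. The epigraph of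
  \<open>f \<circ> g\<close> is the preimage of the convex set \<open>epigraph f\<close> under \<open>(x, \<alpha>) \<mapsto> (g x, \<alpha>)\<close>, which
  inherits all these properties.\<close>

lemma setdistN_le: "y \<in> T \<Longrightarrow> N (v - y) \<le> b \<Longrightarrow> setdistN N v T \<le> ereal b"
  unfolding setdistN_def by (rule INF_lower2) auto

lemma setdistN_less_ereal_iff: "setdistN N v T < ereal b \<longleftrightarrow> (\<exists>y\<in>T. N (v - y) < b)"
  unfolding setdistN_def by (auto simp: INF_less_iff)

lemma shapiro_at_N_if_norm_equivalent:
  fixes C :: "'a::real_normed_vector set"
  assumes sh: "shapiro_at C a" and m: "m > 0" and M: "M > 0"
    and lower: "\<And>p. m * norm p \<le> N p" and upper: "\<And>p. N p \<le> M * norm p"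
  shows "shapiro_at_N N C a"
  unfolding shapiro_at_N_def
proof (intro conjI allI impI)
  show "a \<in> C" using sh unfolding shapiro_at_N_def by blast
  fix \<epsilon> :: real assume \<epsilon>: "\<epsilon> > 0"
  then obtain \<delta> where \<delta>: "\<delta> > 0" and near: "\<forall>x\<in>C. \<forall>u\<in>C. norm (x - a) < \<delta> \<longrightarrow> norm (u - a) < \<delta> \<longrightarrow>
      setdist_pt (x - u) (bouligand_cone C u) \<le> ereal (\<epsilon> * m / M * norm (x - u))"
    using sh m M unfolding shapiro_at_N_def by (metis divide_pos_pos mult_pos_pos)
  have small: "norm p < \<delta>" if "N p < m * \<delta>" for p
    using lower[of p] that m by (smt (verit) mult_less_cancel_left_pos)
  show "\<exists>\<delta>>0. \<forall>x\<in>C. \<forall>u\<in>C. N (x - a) < \<delta> \<longrightarrow> N (u - a) < \<delta> \<longrightarrow>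
      setdistN N (x - u) (bouligand_cone C u) \<le> ereal (\<epsilon> * N (x - u))"
  proof (intro exI[of _ "m * \<delta>"] conjI ballI impI)
    show "m * \<delta> > 0" using m \<delta> by simp
    fix x u assume "x \<in> C" "u \<in> C" "N (x - a) < m * \<delta>" "N (u - a) < m * \<delta>"
    then have sd: "setdist_pt (x - u) (bouligand_cone C u) \<le> ereal (\<epsilon> * m / M * norm (x - u))"
      using near small by blast
    show "setdistN N (x - u) (bouligand_cone C u) \<le> ereal (\<epsilon> * N (x - u))"
    proof (rule ereal_le_epsilon2)
      fix e :: real assume e: "e > 0"
      have "setdist_pt (x - u) (bouligand_cone C u) < ereal (\<epsilon> * m / M * norm (x - u) + e / M)"
        using sd e M by (simp add: order_le_less_trans)
      then obtain y where y: "y \<in> bouligand_cone C u"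
        and close: "norm (x - u - y) < \<epsilon> * m / M * norm (x - u) + e / M"
        unfolding setdistN_less_ereal_iff by blast
      have "N (x - u - y) \<le> M * norm (x - u - y)" by (rule upper)
      also have "\<dots> \<le> \<epsilon> * (m * norm (x - u)) + e"
        using close M by (simp add: field_simps)
      also have "\<dots> \<le> \<epsilon> * N (x - u) + e"
        using lower[of "x - u"] \<epsilon> by simp
      finally show "setdistN N (x - u) (bouligand_cone C u) \<le> ereal (\<epsilon> * N (x - u)) + ereal e"
        using setdistN_le[OF y] by simp
    qed
  qed
qed

lemma bouligand_coneI_eventually:
  assumes "vs \<longlonglongrightarrow> v" "ts \<longlonglongrightarrow> 0" "\<forall>n. ts n > (0::real)" "decseq ts"
    and "eventually (\<lambda>n. c + ts n *\<^sub>R vs n \<in> C) sequentially"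
  shows "v \<in> bouligand_cone C c"
proof -
  obtain k where k: "\<forall>n\<ge>k. c + ts n *\<^sub>R vs n \<in> C"
    using assms(5) unfolding eventually_sequentially by auto
  show ?thesis unfolding bouligand_cone_def
  proof (intro CollectI exI[of _ "\<lambda>n. vs (n + k)"] exI[of _ "\<lambda>n. ts (n + k)"] conjI allI)
    show "(\<lambda>n. vs (n + k)) \<longlonglongrightarrow> v" using LIMSEQ_ignore_initial_segment[OF assms(1)] .
    show "(\<lambda>n. ts (n + k)) \<longlonglongrightarrow> 0" using LIMSEQ_ignore_initial_segment[OF assms(2)] .
    show "decseq (\<lambda>n. ts (n + k))" using assms(4) by (intro decseq_SucI) (simp add: decseq_SucD)
    show "0 < ts (n + k)" for n using assms(3) by blast
    show "c + ts (n + k) *\<^sub>R vs (n + k) \<in> C" for n using k by simp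
  qed
qed

lemma convex_diff_in_bouligand_cone:
  assumes "convex K" "k \<in> K" "c \<in> K"
  shows "k - c \<in> bouligand_cone K c"
proof -
  define ts where "ts n = inverse (real (Suc n))" for n
  have "c + ts n *\<^sub>R (k - c) = (1 - ts n) *\<^sub>R c + ts n *\<^sub>R k" for n
    by (simp add: algebra_simps)
  moreover have "0 \<le> ts n" "ts n \<le> 1" for n by (auto simp: ts_def field_simps)
  ultimately have "c + ts n *\<^sub>R (k - c) \<in> K" for n
    using assms by (simp add: convexD)
  moreover have "ts \<longlonglongrightarrow> 0" unfolding ts_def by (rule LIMSEQ_inverse_real_of_nat)
  moreover have "decseq ts" unfolding ts_def by (intro decseq_SucI) (simp add: field_simps)
  moreover have "\<forall>n. ts n > 0" by (simp add: ts_def)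
  ultimately show ?thesis unfolding bouligand_cone_def
    by (intro CollectI exI[of _ "\<lambda>n. k - c"] exI[of _ ts]) auto
qed

lemma convex_fun_sublevel:
  assumes "convex_fun f"
  shows "convex {y. f y \<le> ereal c}"
proof (rule convexI)
  fix y1 y2 and u v :: real
  assume "y1 \<in> {y. f y \<le> ereal c}" "y2 \<in> {y. f y \<le> ereal c}" "0 \<le> u" "0 \<le> v" "u + v = 1"
  then have "u *\<^sub>R (y1, c) + v *\<^sub>R (y2, c) \<in> epigraph f"
    using assms unfolding convex_fun_def by (intro convexD) (auto simp: epigraph_def)
  then show "u *\<^sub>R y1 + v *\<^sub>R y2 \<in> {y. f y \<le> ereal c}"
    using \<open>u + v = 1\<close> by (simp add: epigraph_def flip: distrib_right)
qed

lemma has_derivative_difference_quotient_sequentially: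
  assumes deriv: "(G has_derivative G') (at x)"
    and ts: "ts \<longlonglongrightarrow> 0" and tpos: "\<forall>n. ts n > (0::real)" and vs: "vs \<longlonglongrightarrow> v"
  shows "(\<lambda>n. (G (x + ts n *\<^sub>R vs n) - G x) /\<^sub>R ts n) \<longlonglongrightarrow> G' v"
proof -
  have lin: "bounded_linear G'" using deriv by (rule has_derivative_bounded_linear)
  obtain B where B: "B > 0" "\<And>n. norm (vs n) \<le> B"
    using convergent_imp_Bseq[of vs] vs unfolding Bseq_def convergent_def by blast
  have steps: "(\<lambda>n. ts n *\<^sub>R vs n) \<longlonglongrightarrow> 0"
    using tendsto_scaleR[OF ts vs] by simp
  have "(\<lambda>n. (G (x + ts n *\<^sub>R vs n) - G x) /\<^sub>R ts n - G' (vs n)) \<longlonglongrightarrow> 0"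
  proof (rule LIMSEQ_I)
    fix r :: real assume r: "r > 0"
    then have "r / (2 * B) > 0" using B by simp
    then obtain d where d: "d > 0" "\<forall>y. norm (y - x) < d \<longrightarrow>
        norm (G y - G x - G' (y - x)) \<le> r / (2 * B) * norm (y - x)"
      using deriv unfolding has_derivative_at_alt by blast
    obtain k where k: "\<forall>n\<ge>k. norm (ts n *\<^sub>R vs n - 0) < d"
      using LIMSEQ_D[OF steps d(1)] by blast
    show "\<exists>k. \<forall>n\<ge>k. norm ((G (x + ts n *\<^sub>R vs n) - G x) /\<^sub>R ts n - G' (vs n) - 0) < r"
    proof (intro exI allI impI)
      fix n assume "k \<le> n"
      have t: "ts n > 0" using tpos by blast
      have "norm (G (x + ts n *\<^sub>R vs n) - G x - G' (ts n *\<^sub>R vs n)) \<le> r / (2 * B) * norm (ts n *\<^sub>R vs n)"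
        using d(2)[rule_format, of "x + ts n *\<^sub>R vs n"] k \<open>k \<le> n\<close> by simp
      also have "\<dots> = ts n * (r / (2 * B) * norm (vs n))" using t by simp
      also have "\<dots> \<le> ts n * (r / 2)"
        using t r B by (intro mult_left_mono) (auto simp: field_simps)
      finally have "norm ((G (x + ts n *\<^sub>R vs n) - G x - G' (ts n *\<^sub>R vs n)) /\<^sub>R ts n) \<le> r / 2"
        using t by (simp add: divide_simps mult.commute)
      moreover have "(G (x + ts n *\<^sub>R vs n) - G x) /\<^sub>R ts n - G' (vs n)
          = (G (x + ts n *\<^sub>R vs n) - G x - G' (ts n *\<^sub>R vs n)) /\<^sub>R ts n"
        using t by (simp add: linear_simps[OF lin] algebra_simps)
      ultimately show "norm ((G (x + ts n *\<^sub>R vs n) - G x) /\<^sub>R ts n - G' (vs n) - 0) < r"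
        using r by simp
    qed
  qed
  from tendsto_add[OF this bounded_linear.tendsto[OF lin vs]] show ?thesis by simp
qed

lemma bouligand_cone_vimage_subset:
  assumes deriv: "(G has_derivative G') (at x)" and v: "v \<in> bouligand_cone (G -` K) x"
  shows "G' v \<in> bouligand_cone K (G x)"
proof -
  obtain vs ts where vs: "vs \<longlonglongrightarrow> v" and ts: "ts \<longlonglongrightarrow> 0" and tpos: "\<forall>n. ts n > (0::real)"
    and dec: "decseq ts" and in_vimage: "\<forall>n. x + ts n *\<^sub>R vs n \<in> G -` K"
    using v unfolding bouligand_cone_def by blast
  define ws where "ws n = (G (x + ts n *\<^sub>R vs n) - G x) /\<^sub>R ts n" for n
  have "ws \<longlonglongrightarrow> G' v"
    unfolding ws_def by (rule has_derivative_difference_quotient_sequentially[OF deriv ts tpos vs])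
  moreover have "G x + ts n *\<^sub>R ws n \<in> K" for n
    using in_vimage tpos[rule_format, of n] by (simp add: ws_def)
  ultimately show ?thesis unfolding bouligand_cone_def using ts tpos dec by blast
qed

lemma bounded_linear_solution_from_approximate_solutions:
  fixes A :: "'a::banach \<Rightarrow> 'b::real_normed_vector"
  assumes lin: "bounded_linear A" and c: "c \<ge> 0"
    and approx: "\<And>r. \<exists>h. norm h \<le> c * norm r \<and> norm (A h - r) \<le> norm r / 2"
  shows "\<exists>h. A h = r \<and> norm h \<le> 2 * c * norm r"
proof -
  obtain H where H: "\<And>r. norm (H r) \<le> c * norm r \<and> norm (A (H r) - r) \<le> norm r / 2"
    using approx by metis
  define R where "R = rec_nat r (\<lambda>_ x. x - A (H x))"
  have R0: "R 0 = r" and RS: "\<And>n. R (Suc n) = R n - A (H (R n))" by (simp_all add: R_def)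
  have R_bound: "norm (R n) \<le> norm r * (1/2)^n" for n
  proof (induction n)
    case 0 then show ?case by (simp add: R0)
  next
    case (Suc n)
    have "norm (R (Suc n)) = norm (A (H (R n)) - R n)" by (simp add: RS norm_minus_commute)
    also have "\<dots> \<le> norm (R n) / 2" using H by blast
    also have "\<dots> \<le> norm r * (1/2)^Suc n" using Suc by simp
    finally show ?case .
  qed
  define hs where "hs n = H (R n)" for n
  have hs_bound: "norm (hs n) \<le> c * norm r * (1/2)^n" for n
    using H[of "R n"] R_bound[of n] mult_left_mono[OF R_bound[of n] c] unfolding hs_def
    by (simp add: mult.assoc)
  have geom: "summable (\<lambda>n. c * norm r * (1/2::real)^n)"
    by (intro summable_mult summable_geometric) simp
  have "summable hs"
    by (rule summable_comparison_test[OF _ geom]) (use hs_bound in auto)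
  have "(\<lambda>n. norm r * (1/2::real)^n) \<longlonglongrightarrow> 0"
    using tendsto_mult[OF tendsto_const LIMSEQ_realpow_zero[of "1/2::real"]] by simp
  then have "(\<lambda>n. norm (R n)) \<longlonglongrightarrow> 0"
    by (rule Lim_null_comparison[rotated]) (use R_bound in \<open>simp add: always_eventually\<close>)
  then have "R \<longlonglongrightarrow> 0" by (rule tendsto_norm_zero_cancel)
  then have "(\<lambda>n. R n - R (Suc n)) sums (R 0 - 0)" by (rule telescope_sums')
  then have "(\<lambda>n. A (hs n)) sums r" by (simp add: R0 RS hs_def)
  moreover have "(\<lambda>n. A (hs n)) sums A (suminf hs)"
    using bounded_linear.sums[OF lin summable_sums[OF \<open>summable hs\<close>]] .
  ultimately have "A (suminf hs) = r" using sums_unique2 by blast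
  moreover have "norm (suminf hs) \<le> (\<Sum>n. c * norm r * (1/2::real)^n)"
    by (rule norm_suminf_le[OF hs_bound geom])
  moreover have "(\<Sum>n. c * norm r * (1/2::real)^n) = 2 * c * norm r"
    by (subst suminf_mult) (simp_all add: suminf_geometric)
  ultimately show ?thesis by auto
qed

lemma continuous_derivative_imp_strict_estimate:
  fixes g :: "'a::real_normed_vector \<Rightarrow> 'b::real_normed_vector" and g' :: "'a \<Rightarrow> ('a \<Rightarrow>\<^sub>L 'b)"
  assumes deriv: "\<And>x. (g has_derivative blinfun_apply (g' x)) (at x)"
    and cont: "continuous_on UNIV g'" and e: "e > 0"
  shows "\<exists>d>0. \<forall>x z. norm (x - a) < d \<longrightarrow> norm (z - a) < d \<longrightarrow>
           norm (g z - g x - g' x (z - x)) \<le> e * norm (z - x)"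
proof -
  obtain d where d: "d > 0" and close: "\<And>y. dist y a < d \<Longrightarrow> dist (g' y) (g' a) < e/2"
    using cont e unfolding continuous_on_iff by (meson UNIV_I half_gt_zero)
  have "norm (g z - g x - g' x (z - x)) \<le> norm (z - x) * e"
    if "norm (x - a) < d" "norm (z - a) < d" for x z
  proof (rule differentiable_bound_linearization[where S = "ball a d"])
    have z: "z \<in> ball a d" using that by (simp add: dist_norm norm_minus_commute)
    show x: "x \<in> ball a d" using that by (simp add: dist_norm norm_minus_commute)
    show "x + t *\<^sub>R (z - x) \<in> ball a d" if "t \<in> {0..1}" for t
    proof -
      have "x + t *\<^sub>R (z - x) = (1 - t) *\<^sub>R x + t *\<^sub>R z" by (simp add: algebra_simps)
      then show ?thesis using convexD[OF convex_ball x z, of "1 - t" t] that by simp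
    qed
    show "(g has_derivative blinfun_apply (g' y)) (at y within ball a d)" for y
      using deriv by (rule has_derivative_at_withinI)
    show "onorm (blinfun_apply (g' y) - blinfun_apply (g' x)) \<le> e" if "y \<in> ball a d" for y
    proof -
      have "blinfun_apply (g' y) - blinfun_apply (g' x) = blinfun_apply (g' y - g' x)"
        by (auto simp: fun_eq_iff blinfun.diff_left)
      then have "onorm (blinfun_apply (g' y) - blinfun_apply (g' x)) = norm (g' y - g' x)"
        by (simp add: norm_blinfun.rep_eq)
      also have "\<dots> \<le> dist (g' y) (g' a) + dist (g' x) (g' a)"
        using dist_triangle2[of "g' y" "g' x" "g' a"] by (simp add: dist_norm)
      also have "\<dots> < e"
        using close[of y] close[of x] that x by (simp add: dist_commute)
      finally show ?thesis by simp
    qed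
  qed
  then show ?thesis using d by (auto simp: mult.commute)
qed

lemma metrically_regular_aroundE:
  assumes "metrically_regular_around g xb"
  obtains \<kappa> U V where "\<kappa> > 0" "open U" "xb \<in> U" "open V" "g xb \<in> V"
    "\<And>x y e. x \<in> U \<Longrightarrow> y \<in> V \<Longrightarrow> e > 0 \<Longrightarrow> \<exists>z. g z = y \<and> norm (x - z) \<le> \<kappa> * norm (g x - y) + e"
proof -
  obtain \<kappa> U V where nbhds: "\<kappa> > 0" "open U" "xb \<in> U" "open V" "g xb \<in> V"
    and mr: "\<forall>x\<in>U. \<forall>y\<in>V. setdist_pt x (g -` {y}) \<le> ereal (\<kappa> * norm (g x - y))"
    using assms unfolding metrically_regular_around_def by blast
  have "\<exists>z. g z = y \<and> norm (x - z) \<le> \<kappa> * norm (g x - y) + e"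
    if "x \<in> U" "y \<in> V" "e > 0" for x y e
  proof -
    have "setdist_pt x (g -` {y}) \<le> ereal (\<kappa> * norm (g x - y))" using mr that by blast
    also have "\<dots> < ereal (\<kappa> * norm (g x - y) + e)" using that by simp
    finally show ?thesis unfolding setdistN_less_ereal_iff by (auto intro: less_imp_le)
  qed
  with nbhds show thesis by (rule that)
qed

locale metrically_regular_preimage =
  fixes G :: "'a::banach \<Rightarrow> 'b::real_normed_vector" and G' :: "'a \<Rightarrow> 'a \<Rightarrow> 'b"
    and K :: "'b set" and \<kappa> :: real and U :: "'a set" and V :: "'b set"
  assumes deriv: "\<And>x. (G has_derivative G' x) (at x)"
    and strict_deriv: "\<And>a e. e > 0 \<Longrightarrow> \<exists>d>0. \<forall>x z. norm (x - a) < d \<longrightarrow> norm (z - a) < d \<longrightarrow>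
           norm (G z - G x - G' x (z - x)) \<le> e * norm (z - x)"
    and convex_K: "convex K"
    and kappa_nonneg: "\<kappa> \<ge> 0" and open_U: "open U" and open_V: "open V"
    and regular: "\<And>x y e. x \<in> U \<Longrightarrow> y \<in> V \<Longrightarrow> e > 0 \<Longrightarrow>
           \<exists>z. G z = y \<and> norm (x - z) \<le> \<kappa> * norm (G x - y) + e"
begin

lemma bounded_linear_G': "bounded_linear (G' x)"
  using deriv by (rule has_derivative_bounded_linear)

lemma open_regularity_region: "open (U \<inter> G -` V)"
proof -
  have "continuous_on UNIV G"
    using deriv has_derivative_continuous continuous_at_imp_continuous_on by blast
  with open_V have "open (G -` V)" by (rule open_vimage)
  with open_U show ?thesis by (rule open_Int)
qed

lemma scaled_preimage:
  assumes "x + t *\<^sub>R w \<in> U" "G x + t *\<^sub>R y \<in> V" and t: "t > 0" and "e > 0"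
  shows "\<exists>v. G (x + t *\<^sub>R v) = G x + t *\<^sub>R y \<and>
    norm (v - w) \<le> \<kappa> * norm ((G (x + t *\<^sub>R w) - G x) /\<^sub>R t - y) + e"
proof -
  obtain z where z: "G z = G x + t *\<^sub>R y"
    and z_near: "norm (x + t *\<^sub>R w - z) \<le> \<kappa> * norm (G (x + t *\<^sub>R w) - (G x + t *\<^sub>R y)) + t * e"
    using regular[OF assms(1,2), of "t * e"] t \<open>e > 0\<close> by auto
  define v where "v = (z - x) /\<^sub>R t"
  have "v - w = - (x + t *\<^sub>R w - z) /\<^sub>R t" using t by (simp add: v_def algebra_simps)
  then have "norm (v - w) = norm (x + t *\<^sub>R w - z) / t"
    using t by (simp add: divide_inverse mult.commute norm_minus_commute)
  also have "\<dots> \<le> (\<kappa> * norm (G (x + t *\<^sub>R w) - (G x + t *\<^sub>R y)) + t * e) / t"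
    using z_near t by (simp add: divide_right_mono)
  also have "\<dots> = \<kappa> * norm ((G (x + t *\<^sub>R w) - G x) /\<^sub>R t - y) + e"
  proof -
    have "G (x + t *\<^sub>R w) - (G x + t *\<^sub>R y) = t *\<^sub>R ((G (x + t *\<^sub>R w) - G x) /\<^sub>R t - y)"
      using t by (simp add: algebra_simps)
    then have "norm (G (x + t *\<^sub>R w) - (G x + t *\<^sub>R y)) = t * norm ((G (x + t *\<^sub>R w) - G x) /\<^sub>R t - y)"
      using t by simp
    then show ?thesis using t by (simp add: add_divide_distrib)
  qed
  finally have "norm (v - w) \<le> \<kappa> * norm ((G (x + t *\<^sub>R w) - G x) /\<^sub>R t - y) + e" .
  moreover have "x + t *\<^sub>R v = z" using t by (simp add: v_def)
  ultimately show ?thesis using z by blast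
qed

lemma tangent_lift_sequence:
  assumes x: "x \<in> U" "G x \<in> V" and ts: "ts \<longlonglongrightarrow> 0" and tpos: "\<forall>n. ts n > (0::real)"
    and ys: "ys \<longlonglongrightarrow> G' x w"
  obtains vs where "vs \<longlonglongrightarrow> w" "eventually (\<lambda>n. G (x + ts n *\<^sub>R vs n) = G x + ts n *\<^sub>R ys n) sequentially"
proof -
  have "(\<lambda>n. x + ts n *\<^sub>R w) \<longlonglongrightarrow> x + 0 *\<^sub>R w"
    by (intro tendsto_add tendsto_const tendsto_scaleR ts)
  then have ev_U: "eventually (\<lambda>n. x + ts n *\<^sub>R w \<in> U) sequentially"
    using topological_tendstoD[OF _ open_U] x by simp
  have "(\<lambda>n. G x + ts n *\<^sub>R ys n) \<longlonglongrightarrow> G x + 0 *\<^sub>R G' x w"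
    by (intro tendsto_add tendsto_const tendsto_scaleR ts ys)
  then have ev_V: "eventually (\<lambda>n. G x + ts n *\<^sub>R ys n \<in> V) sequentially"
    using topological_tendstoD[OF _ open_V] x by simp
  define b where "b n = \<kappa> * norm ((G (x + ts n *\<^sub>R w) - G x) /\<^sub>R ts n - ys n) + 1 / real (Suc n)" for n
  have "\<exists>v. G (x + ts n *\<^sub>R v) = G x + ts n *\<^sub>R ys n \<and> norm (v - w) \<le> b n"
    if "x + ts n *\<^sub>R w \<in> U" "G x + ts n *\<^sub>R ys n \<in> V" for n
    using scaled_preimage[OF that, of "1 / real (Suc n)"] tpos unfolding b_def by simp
  then have "\<exists>vs. \<forall>n. x + ts n *\<^sub>R w \<in> U \<longrightarrow> G x + ts n *\<^sub>R ys n \<in> V \<longrightarrow>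
      G (x + ts n *\<^sub>R vs n) = G x + ts n *\<^sub>R ys n \<and> norm (vs n - w) \<le> b n"
    by (intro choice) blast
  then obtain vs where vs: "\<And>n. x + ts n *\<^sub>R w \<in> U \<Longrightarrow> G x + ts n *\<^sub>R ys n \<in> V \<Longrightarrow>
      G (x + ts n *\<^sub>R vs n) = G x + ts n *\<^sub>R ys n \<and> norm (vs n - w) \<le> b n"
    by blast
  have "(\<lambda>n. (G (x + ts n *\<^sub>R w) - G x) /\<^sub>R ts n - ys n) \<longlonglongrightarrow> G' x w - G' x w"
    using has_derivative_difference_quotient_sequentially[OF deriv ts tpos tendsto_const[of w]] ys
    by (rule tendsto_diff)
  then have "(\<lambda>n. norm ((G (x + ts n *\<^sub>R w) - G x) /\<^sub>R ts n - ys n)) \<longlonglongrightarrow> 0"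
    by (simp add: tendsto_norm_zero_iff)
  then have "b \<longlonglongrightarrow> \<kappa> * 0 + 0" unfolding b_def
    by (intro tendsto_add tendsto_mult tendsto_const LIMSEQ_inverse_real_of_nat[unfolded inverse_eq_divide])
  then have b0: "b \<longlonglongrightarrow> 0" by simp
  have "eventually (\<lambda>n. norm (vs n - w) \<le> b n) sequentially"
    using ev_U ev_V by eventually_elim (use vs in blast)
  then have "(\<lambda>n. vs n - w) \<longlonglongrightarrow> 0"
    using b0 by (rule Lim_null_comparison)
  then have "vs \<longlonglongrightarrow> w" using Lim_null[of vs w sequentially] by simp
  moreover have "eventually (\<lambda>n. G (x + ts n *\<^sub>R vs n) = G x + ts n *\<^sub>R ys n) sequentially"
    using ev_U ev_V by eventually_elim (use vs in blast)
  ultimately show thesis by (rule that)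
qed

lemma bouligand_cone_vimage_supset:
  assumes x: "x \<in> U" "G x \<in> V" and w: "G' x w \<in> bouligand_cone K (G x)"
  shows "w \<in> bouligand_cone (G -` K) x"
proof -
  obtain ys ts where ys: "ys \<longlonglongrightarrow> G' x w" and ts: "ts \<longlonglongrightarrow> 0" and tpos: "\<forall>n. ts n > (0::real)"
    and dec: "decseq ts" and in_K: "\<forall>n. G x + ts n *\<^sub>R ys n \<in> K"
    using w unfolding bouligand_cone_def by blast
  obtain vs where vs: "vs \<longlonglongrightarrow> w"
    and lifted: "eventually (\<lambda>n. G (x + ts n *\<^sub>R vs n) = G x + ts n *\<^sub>R ys n) sequentially"
    using tangent_lift_sequence[OF x ts tpos ys] by blast
  have "eventually (\<lambda>n. x + ts n *\<^sub>R vs n \<in> G -` K) sequentially"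
    using lifted by eventually_elim (use in_K in simp)
  with vs show ?thesis using ts tpos dec by (intro bouligand_coneI_eventually[of vs w ts])
qed

lemma bouligand_cone_vimage:
  assumes "x \<in> U" "G x \<in> V"
  shows "bouligand_cone (G -` K) x = G' x -` bouligand_cone K (G x)"
  using bouligand_cone_vimage_subset[OF deriv] bouligand_cone_vimage_supset[OF assms] by blast

lemma approximate_right_inverse:
  assumes u: "u \<in> U" "G u \<in> V"
  shows "\<exists>h. norm h \<le> (\<kappa> + 1) * norm r \<and> norm (G' u h - r) \<le> norm r / 2"
proof (cases "r = 0")
  case True
  then show ?thesis by (intro exI[of _ 0]) (simp add: linear_simps[OF bounded_linear_G'])
next
  case False
  then have nr: "norm r > 0" by simp
  define \<epsilon> where "\<epsilon> = 1 / (2 * (\<kappa> + 1))"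
  have half: "\<epsilon> * (\<kappa> + 1) = 1 / 2" using kappa_nonneg by (simp add: \<epsilon>_def)
  have "\<epsilon> > 0" using kappa_nonneg by (simp add: \<epsilon>_def)
  then obtain d where d: "d > 0" and lin_err: "\<And>z. norm (z - u) < d \<Longrightarrow>
      norm (G z - G u - G' u (z - u)) \<le> \<epsilon> * norm (z - u)"
    using deriv[of u] unfolding has_derivative_at_alt by blast
  obtain e where e: "e > 0" "ball (G u) e \<subseteq> V" using open_V u(2) open_contains_ball by blast
  define t where "t = min (e / 2) (d / (2 * (\<kappa> + 1))) / norm r"
  have t: "t > 0" using e d nr kappa_nonneg by (simp add: t_def)
  have tr: "t * norm r = min (e / 2) (d / (2 * (\<kappa> + 1)))" using nr by (simp add: t_def)
  then have tr_e: "t * norm r < e" using e by linarith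
  have "(\<kappa> + 1) * (t * norm r) \<le> (\<kappa> + 1) * (d / (2 * (\<kappa> + 1)))"
    using tr kappa_nonneg by (intro mult_left_mono) auto
  also have "\<dots> = d / 2" using kappa_nonneg by (simp add: field_simps)
  also have "\<dots> < d" using d by simp
  finally have tr_d: "(\<kappa> + 1) * (t * norm r) < d" .
  have "G u + t *\<^sub>R r \<in> V" using e(2) tr_e t by (auto simp: dist_norm)
  then obtain z where z: "G z = G u + t *\<^sub>R r"
    and z_near: "norm (u - z) \<le> \<kappa> * norm (G u - (G u + t *\<^sub>R r)) + t * norm r"
    using regular[OF u(1)] t nr by (meson mult_pos_pos)
  have zu: "norm (z - u) \<le> (\<kappa> + 1) * (t * norm r)"
    using z_near t by (simp add: norm_minus_commute algebra_simps)
  define h where "h = (z - u) /\<^sub>R t"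
  have "norm h = norm (z - u) / t" using t by (simp add: h_def divide_inverse mult.commute)
  also have "\<dots> \<le> (\<kappa> + 1) * norm r" using zu t by (simp add: field_simps)
  finally have "norm h \<le> (\<kappa> + 1) * norm r" .
  moreover have "norm (G' u h - r) \<le> norm r / 2"
  proof -
    have "G' u h - r = - (G z - G u - G' u (z - u)) /\<^sub>R t"
      using t z by (simp add: h_def linear_simps[OF bounded_linear_G'] algebra_simps)
    then have "norm (G' u h - r) = norm (G z - G u - G' u (z - u)) / t"
      using t by (simp add: divide_inverse mult.commute norm_minus_commute)
    also have "\<dots> \<le> \<epsilon> * ((\<kappa> + 1) * (t * norm r)) / t"
      using lin_err[of z] zu tr_d t \<open>\<epsilon> > 0\<close>
      by (intro divide_right_mono order.trans[OF _ mult_left_mono[OF zu]]) auto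
    also have "\<dots> = (\<epsilon> * (\<kappa> + 1)) * norm r * (t / t)" by (simp add: ac_simps)
    also have "\<dots> = norm r / 2" using t by (simp only: half) simp
    finally show ?thesis .
  qed
  ultimately show ?thesis by blast
qed

lemma right_inverse:
  assumes "u \<in> U" "G u \<in> V"
  shows "\<exists>h. G' u h = r \<and> norm h \<le> 2 * (\<kappa> + 1) * norm r"
  using bounded_linear_solution_from_approximate_solutions[OF bounded_linear_G']
    approximate_right_inverse[OF assms] kappa_nonneg
  by (metis add_nonneg_nonneg zero_le_one)

lemma tangent_approximation:
  assumes x: "x \<in> G -` K" and u: "u \<in> G -` K" "u \<in> U" "G u \<in> V"
  shows "\<exists>w\<in>bouligand_cone (G -` K) u.
    norm (x - u - w) \<le> 2 * (\<kappa> + 1) * norm (G x - G u - G' u (x - u))"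
proof -
  obtain e where e: "G' u e = G x - G u - G' u (x - u)"
    and e_small: "norm e \<le> 2 * (\<kappa> + 1) * norm (G x - G u - G' u (x - u))"
    using right_inverse[OF u(2,3)] by blast
  have "G' u (x - u + e) = G x - G u"
    using e by (simp add: linear_simps[OF bounded_linear_G'])
  moreover have "G x - G u \<in> bouligand_cone K (G u)"
    using convex_diff_in_bouligand_cone[OF convex_K] x u by simp
  ultimately have "x - u + e \<in> bouligand_cone (G -` K) u"
    using bouligand_cone_vimage_supset[OF u(2,3)] by simp
  then show ?thesis using e_small by (intro bexI[of _ "x - u + e"]) simp_all
qed

lemma shapiro_at_vimage:
  assumes a: "a \<in> G -` K" "a \<in> U" "G a \<in> V"
  shows "shapiro_at (G -` K) a"
  unfolding shapiro_at_N_def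
proof (intro conjI allI impI)
  show "a \<in> G -` K" by (rule a(1))
  fix \<epsilon> :: real assume "\<epsilon> > 0"
  then have "\<epsilon> / (2 * (\<kappa> + 1)) > 0" using kappa_nonneg by simp
  then obtain d where d: "d > 0" and lin_err: "\<forall>x z. norm (x - a) < d \<longrightarrow> norm (z - a) < d \<longrightarrow>
      norm (G z - G x - G' x (z - x)) \<le> \<epsilon> / (2 * (\<kappa> + 1)) * norm (z - x)"
    using strict_deriv by blast
  obtain r where r: "r > 0" "ball a r \<subseteq> U \<inter> G -` V"
    using open_regularity_region a open_contains_ball by blast
  show "\<exists>\<delta>>0. \<forall>x\<in>G -` K. \<forall>u\<in>G -` K. norm (x - a) < \<delta> \<longrightarrow> norm (u - a) < \<delta> \<longrightarrow>
      setdist_pt (x - u) (bouligand_cone (G -` K) u) \<le> ereal (\<epsilon> * norm (x - u))"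
  proof (intro exI[of _ "min d r"] conjI ballI impI)
    show "min d r > 0" using d r by simp
    fix x u assume x: "x \<in> G -` K" and u: "u \<in> G -` K"
      and near: "norm (x - a) < min d r" "norm (u - a) < min d r"
    then have "u \<in> U" "G u \<in> V" using r(2) by (auto simp: dist_norm norm_minus_commute)
    then obtain w where w: "w \<in> bouligand_cone (G -` K) u"
      and w_close: "norm (x - u - w) \<le> 2 * (\<kappa> + 1) * norm (G x - G u - G' u (x - u))"
      using tangent_approximation[OF x u] by blast
    note w_close
    also have "\<dots> \<le> 2 * (\<kappa> + 1) * (\<epsilon> / (2 * (\<kappa> + 1)) * norm (x - u))"
      using lin_err near kappa_nonneg by (intro mult_left_mono) auto
    also have "\<dots> = \<epsilon> * norm (x - u)" using kappa_nonneg by simp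
    finally show "setdist_pt (x - u) (bouligand_cone (G -` K) u) \<le> ereal (\<epsilon> * norm (x - u))"
      by (rule setdistN_le[OF w])
  qed
qed

lemma shapiro_around_vimage:
  assumes "xb \<in> U" "G xb \<in> V"
  shows "shapiro_around (G -` K) xb"
  unfolding shapiro_around_def using assms open_regularity_region shapiro_at_vimage by blast

lemma bouligand_cone_vimage_near:
  assumes "xb \<in> U" "G xb \<in> V"
  shows "\<exists>\<delta>>0. \<forall>x\<in>G -` K \<inter> ball xb \<delta>. bouligand_cone (G -` K) x = G' x -` bouligand_cone K (G x)"
proof -
  obtain \<delta> where "\<delta> > 0" "ball xb \<delta> \<subseteq> U \<inter> G -` V"
    using assms open_regularity_region open_contains_ball by blast
  then show ?thesis using bouligand_cone_vimage by blast
qed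

end

lemma (in metrically_regular_preimage) metrically_regular_preimage_times_real:
  fixes L :: "('b \<times> real) set"
  assumes "convex L"
  shows "metrically_regular_preimage (\<lambda>p. (G (fst p), snd p)) (\<lambda>p q. (G' (fst p) (fst q), snd q))
    L (\<kappa> + 1) (U \<times> UNIV) (V \<times> UNIV)"
proof
  show "((\<lambda>p. (G (fst p), snd p)) has_derivative (\<lambda>q. (G' (fst p) (fst q), snd q))) (at p)"
    for p :: "'a \<times> real"
    by (rule has_derivative_Pair[OF has_derivative_compose[OF has_derivative_fst[OF has_derivative_ident] deriv]
        has_derivative_snd[OF has_derivative_ident]])
  show "\<exists>d>0. \<forall>x z. norm (x - a) < d \<longrightarrow> norm (z - a) < d \<longrightarrow>
      norm ((G (fst z), snd z) - (G (fst x), snd x) - (G' (fst x) (fst (z - x)), snd (z - x)))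
        \<le> e * norm (z - x)"
    if "e > 0" for a :: "'a \<times> real" and e
  proof -
    obtain d where "d > 0" and lin_err: "\<forall>x z. norm (x - fst a) < d \<longrightarrow> norm (z - fst a) < d \<longrightarrow>
        norm (G z - G x - G' x (z - x)) \<le> e * norm (z - x)"
      using strict_deriv[OF \<open>e > 0\<close>] by blast
    have fst_le: "norm (fst p) \<le> norm p" for p :: "'a \<times> real"
      using norm_fst_le[of "fst p" "snd p"] by simp
    have "norm (G (fst z) - G (fst x) - G' (fst x) (fst z - fst x)) \<le> e * norm (z - x)"
      if "norm (x - a) < d" "norm (z - a) < d" for x z :: "'a \<times> real"
      using lin_err fst_le[of "x - a"] fst_le[of "z - a"] fst_le[of "z - x"] that \<open>e > 0\<close>
      by (smt (verit, best) fst_diff mult_left_mono)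
    then show ?thesis using \<open>d > 0\<close> by (auto simp: norm_Pair)
  qed
  show "convex L" by fact
  show "\<kappa> + 1 \<ge> 0" using kappa_nonneg by simp
  show "open (U \<times> (UNIV :: real set))" "open (V \<times> (UNIV :: real set))"
    using open_U open_V by (simp_all add: open_Times)
  show "\<exists>z. (G (fst z), snd z) = y \<and> norm (x - z) \<le> (\<kappa> + 1) * norm ((G (fst x), snd x) - y) + e"
    if xy: "x \<in> U \<times> UNIV" "y \<in> V \<times> UNIV" and "e > 0" for x y :: "_ \<times> real" and e
  proof -
    obtain z where z: "G z = fst y" and z_near: "norm (fst x - z) \<le> \<kappa> * norm (G (fst x) - fst y) + e"
      using regular[of "fst x" "fst y" e] xy \<open>e > 0\<close> by (auto simp: mem_Times_iff)
    have "x - (z, snd y) = (fst x - z, snd x - snd y)" by (simp add: prod_eq_iff)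
    then have "norm (x - (z, snd y)) \<le> norm (fst x - z) + norm (snd x - snd y)"
      using norm_Pair_le by metis
    moreover have "(G (fst x), snd x) - y = (G (fst x) - fst y, snd x - snd y)"
      by (simp add: prod_eq_iff)
    then have fst_le: "norm (G (fst x) - fst y) \<le> norm ((G (fst x), snd x) - y)"
      and "norm (snd x - snd y) \<le> norm ((G (fst x), snd x) - y)"
      using norm_fst_le norm_snd_le by metis+
    ultimately have "norm (x - (z, snd y)) \<le> (\<kappa> + 1) * norm ((G (fst x), snd x) - y) + e"
      using z_near mult_left_mono[OF fst_le kappa_nonneg] by (simp add: distrib_right)
    with z show ?thesis by (intro exI[of _ "(z, snd y)"]) simp
  qed
qed

lemma (in metrically_regular_preimage) epi_shapiro_at_comp:
  assumes conv: "convex_fun f" and finite: "f (G xb) = ereal \<alpha>" and xb: "xb \<in> U" "G xb \<in> V"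
  shows "epi_shapiro_at (f \<circ> G) xb"
proof -
  interpret epi: metrically_regular_preimage "\<lambda>p. (G (fst p), snd p)" "\<lambda>p q. (G' (fst p) (fst q), snd q)"
    "epigraph f" "\<kappa> + 1" "U \<times> UNIV" "V \<times> UNIV"
    using conv unfolding convex_fun_def by (rule metrically_regular_preimage_times_real)
  have "(\<lambda>p. (G (fst p), snd p)) -` epigraph f = epigraph (f \<circ> G)"
    by (auto simp: epigraph_def)
  moreover have "shapiro_at ((\<lambda>p. (G (fst p), snd p)) -` epigraph f) (xb, \<alpha>)"
    using epi.shapiro_at_vimage finite xb by (simp add: epigraph_def)
  ultimately have sh: "shapiro_at (epigraph (f \<circ> G)) (xb, \<alpha>)" by simp
  have lower: "1 * norm p \<le> sumnorm p" and upper: "sumnorm p \<le> 2 * norm p" for p :: "'a \<times> real"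
    using norm_Pair_le[of "fst p" "snd p"] norm_fst_le[of "fst p" "snd p"] norm_snd_le[of "snd p" "fst p"]
    by (simp_all add: sumnorm_def)
  have "shapiro_at_N sumnorm (epigraph (f \<circ> G)) (xb, \<alpha>)"
    by (rule shapiro_at_N_if_norm_equivalent[OF sh _ _ lower upper]) simp_all
  then show ?thesis unfolding epi_shapiro_at_def using finite by simp
qed

theorem mainTheorem11:
  fixes g :: "'a::banach \<Rightarrow> 'b::banach"
    and g' :: "'a \<Rightarrow> ('a \<Rightarrow>\<^sub>L 'b)"
    and f :: "'b \<Rightarrow> ereal"
    and xb :: 'a
  assumes deriv: "\<And>x. (g has_derivative blinfun_apply (g' x)) (at x)"
    and cont_deriv: "continuous_on UNIV g'"
    and proper: "proper_fun f" and lsc: "lsc_fun f" and conv: "convex_fun f"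
    and xb_in: "xb \<in> g -` {y. f y \<le> 0}"
    and int_dom: "g xb \<in> interior (effdom f)"
    and mreg: "metrically_regular_around g xb"
  shows "shapiro_around (g -` {y. f y \<le> 0}) xb
    \<and> (\<exists>\<delta>>0. \<forall>x\<in>(g -` {y. f y \<le> 0}) \<inter> ball xb \<delta>.
          bouligand_cone (g -` {y. f y \<le> 0}) x
            = blinfun_apply (g' x) -` bouligand_cone {y. f y \<le> 0} (g x))
    \<and> epi_shapiro_at (f \<circ> g) xb"
proof -
  obtain \<kappa> U V where "\<kappa> > 0" and U: "open U" "xb \<in> U" and V: "open V" "g xb \<in> V"
    and regular: "\<And>x y e. x \<in> U \<Longrightarrow> y \<in> V \<Longrightarrow> e > 0 \<Longrightarrow>
      \<exists>z. g z = y \<and> norm (x - z) \<le> \<kappa> * norm (g x - y) + e"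
    using mreg by (rule metrically_regular_aroundE) blast
  interpret metrically_regular_preimage g "\<lambda>x. blinfun_apply (g' x)" "{y. f y \<le> 0}" \<kappa> U V
  proof
    show "convex {y. f y \<le> 0}" using convex_fun_sublevel[OF conv, of 0] by (simp add: zero_ereal_def)
  qed (use deriv continuous_derivative_imp_strict_estimate[OF deriv cont_deriv] \<open>\<kappa> > 0\<close> U V regular
      in auto)
  obtain \<alpha> where \<alpha>: "f (g xb) = ereal \<alpha>"
    using proper xb_in unfolding proper_fun_def by (cases "f (g xb)") auto
  show ?thesis
    using shapiro_around_vimage[OF U(2) V(2)] bouligand_cone_vimage_near[OF U(2) V(2)]
      epi_shapiro_at_comp[OF conv \<alpha> U(2) V(2)]
    by blast
qed

end
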